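(* An element $M\in\Lambda^{\mathrm{rb}}$ is in normal form with respect to $\to$ (that is, there is no $N\in\Lambda^{\mathrm{rb}}$ with $M\to N$) if and only if $M$ is an atom, i.e. $M\equiv\underline{P}$ for some $P\in\Lambda$.
   Context: **$\lambda$-terms and contexts.** $\Lambda$ is the set of untyped $\lambda$-terms (up to $\alpha$-equivalence). A context $C[\,]$ is a $\lambda$-term with exactly one hole $[\,]$. $C[M]$ is the result of filling the hole with $M$; binders of $C$ may capture free variables of $M$. We write $M\,\vec N$ for $M\,N_1\cdots N_n$ (left-associated), where $n\ge 0$. **Atoms and $\Lambda^\bullet$.** For each $M\in\Lambda$ there is a new formal symbol $\underline{M}$, called an atom. Atoms are constants: they have no free variables, and substitution leaves them unchanged. For $M\in\Lambda$, $M^\bullet$ replaces each free occurrence of each variable $x$ in $M$ by the atom $\underline{x}$. Set $\Lambda^\bullet=\{M^\bullet: M\in\Lambda\}$, with substitution extended to these terms by treating atoms as constants. **The set $\Lambda^{\mathrm{rb}}$.** It is the least set such that: 1. $\underline{M}\in\Lambda^{\mathrm{rb}}$ for all $M\in\Lambda$; 2. $\langle C[\,],M\rangle\in\Lambda^{\mathrm{rb}}$ for every context $C[\,]$ and every $M\in\Lambda^\bullet$; 3. $\langle C[\,],M\,\vec N\rangle\in\Lambda^{\mathrm{rb}}$ for every context $C[\,]$, every $M\in\Lambda^{\mathrm{rb}}$ and all $N_1,\dots,N_n\in\Lambda^\bullet$. **The relation $\to$ on $\Lambda^{\mathrm{rb}}$.** It is the least relation satisfying: - (R1) $\langle C[\,],\underline{M}\rangle\to\underline{C[M]}$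 for $M\in\Lambda$; - (R2) $\langle C[\,],\lambda x.M\rangle\to\langle C[\lambda x.[\,]],M[x:=\underline{x}]\rangle$ for $\lambda x.M\in\Lambda^\bullet$; - (R3) $\langle C[\,],\underline{M}\,N_0\,\vec N\rangle\to\langle C[\,],\langle M\,[\,],N_0\rangle\,\vec N\rangle$ for $M\in\Lambda$ and $N_0,\vec N\in\Lambda^\bullet$; - (R4) $\langle C[\,],(\lambda x.M)\,N_0\,\vec N\rangle\to\langle C[\,],M[x:=N_0]\,\vec N\rangle$ for $\lambda x.M,N_0,\vec N\in\Lambda^\bullet$; - (R5) if $M\to M'$ with $M,M'\in\Lambda^{\mathrm{rb}}$, then $\langle C[\,],M\,\vec N\rangle\to\langle C[\,],M'\,\vec N\rangle$ for every context $C[\,]$ and $\vec N\in\Lambda^\bullet$. *)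

theory Defs
  imports Main
begin

text \<open>Untyped lambda-terms, in locally nameless representation: free variables are
  named (names are natural numbers), bound variables are de Bruijn indices.  The
  locally closed terms are in bijection with lambda-terms up to alpha-equivalence.\<close>

type_synonym var = nat

datatype lam = LVar var | LBVar nat | LApp lam lam | LAbs lam

fun lcn :: "nat \<Rightarrow> lam \<Rightarrow> bool" where
  "lcn k (LVar x) = True"
| "lcn k (LBVar n) = (n < k)"
| "lcn k (LApp s t) = (lcn k s \<and> lcn k t)"
| "lcn k (LAbs t) = lcn (Suc k) t"

text \<open>The set Lambda of lambda-terms (up to alpha) = locally closed terms.\<close>
definition lc :: "lam \<Rightarrow> bool" where "lc t = lcn 0 t"

fun close_at :: "nat \<Rightarrow> var \<Rightarrow> lam \<Rightarrow> lam" where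
  "close_at k x (LVar y) = (if x = y then LBVar k else LVar y)"
| "close_at k x (LBVar n) = LBVar n"
| "close_at k x (LApp s t) = LApp (close_at k x s) (close_at k x t)"
| "close_at k x (LAbs t) = LAbs (close_at (Suc k) x t)"

text \<open>Contexts: lambda-terms with exactly one hole; binders are named and capture
  free variables of the term plugged into the hole.\<close>
datatype ctx = Hole | CAppL ctx lam | CAppR lam ctx | CAbs var ctx

fun ctx_ok :: "ctx \<Rightarrow> bool" where
  "ctx_ok Hole = True"
| "ctx_ok (CAppL C N) = (ctx_ok C \<and> lc N)"
| "ctx_ok (CAppR N C) = (lc N \<and> ctx_ok C)"
| "ctx_ok (CAbs x C) = ctx_ok C"

fun fill :: "ctx \<Rightarrow> lam \<Rightarrow> lam" where
  "fill Hole M = M"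
| "fill (CAppL C N) M = LApp (fill C M) N"
| "fill (CAppR N C) M = LApp N (fill C M)"
| "fill (CAbs x C) M = LAbs (close_at 0 x (fill C M))"

fun ctx_comp :: "ctx \<Rightarrow> ctx \<Rightarrow> ctx" where
  "ctx_comp Hole D = D"
| "ctx_comp (CAppL C N) D = CAppL (ctx_comp C D) N"
| "ctx_comp (CAppR N C) D = CAppR N (ctx_comp C D)"
| "ctx_comp (CAbs x C) D = CAbs x (ctx_comp C D)"

text \<open>Mixed terms: atoms (underlined lambda-terms), bound variables, application,
  abstraction, and pairs \<langle>C[], M\<rangle>.  These host both Lambda-bullet and Lambda-rb.\<close>
datatype mt = Atom lam | MBVar nat | MApp mt mt | MAbs mt | Pair ctx mt

fun bul :: "lam \<Rightarrow> mt" where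
  "bul (LVar x) = Atom (LVar x)"
| "bul (LBVar n) = MBVar n"
| "bul (LApp s t) = MApp (bul s) (bul t)"
| "bul (LAbs t) = MAbs (bul t)"

definition Lbul :: "mt set" where "Lbul = {bul M | M. lc M}"

fun mopen_at :: "nat \<Rightarrow> mt \<Rightarrow> mt \<Rightarrow> mt" where
  "mopen_at k u (Atom P) = Atom P"
| "mopen_at k u (MBVar n) = (if n = k then u else MBVar n)"
| "mopen_at k u (MApp s t) = MApp (mopen_at k u s) (mopen_at k u t)"
| "mopen_at k u (MAbs t) = MAbs (mopen_at (Suc k) u t)"
| "mopen_at k u (Pair C t) = Pair C t"

definition mopen :: "mt \<Rightarrow> mt \<Rightarrow> mt" where "mopen B u = mopen_at 0 u B"

definition apps :: "mt \<Rightarrow> mt list \<Rightarrow> mt" where "apps M Ns = foldl MApp M Ns"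

inductive_set Lrb :: "mt set" where
  rb_atom: "lc M \<Longrightarrow> Atom M \<in> Lrb"
| rb_bul: "ctx_ok C \<Longrightarrow> M \<in> Lbul \<Longrightarrow> Pair C M \<in> Lrb"
| rb_app: "ctx_ok C \<Longrightarrow> M \<in> Lrb \<Longrightarrow> set Ns \<subseteq> Lbul \<Longrightarrow> Pair C (apps M Ns) \<in> Lrb"

text \<open>In (R2) the abstraction \<lambda>x.M is an alpha-class, so its
  bound variable may be named by any x; MAbs B stands for \<lambda>x.M and
  mopen B (Atom (LVar x)) for M[x:=x-underlined].\<close>
inductive step :: "mt \<Rightarrow> mt \<Rightarrow> bool" where
  R1: "ctx_ok C \<Longrightarrow> lc M \<Longrightarrow> step (Pair C (Atom M)) (Atom (fill C M))"
| R2: "ctx_ok C \<Longrightarrow> MAbs B \<in> Lbul \<Longrightarrow>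
       step (Pair C (MAbs B)) (Pair (ctx_comp C (CAbs x Hole)) (mopen B (Atom (LVar x))))"
| R3: "ctx_ok C \<Longrightarrow> lc M \<Longrightarrow> N0 \<in> Lbul \<Longrightarrow> set Ns \<subseteq> Lbul \<Longrightarrow>
       step (Pair C (apps (Atom M) (N0 # Ns)))
            (Pair C (apps (Pair (CAppR M Hole) N0) Ns))"
| R4: "ctx_ok C \<Longrightarrow> MAbs B \<in> Lbul \<Longrightarrow> N0 \<in> Lbul \<Longrightarrow> set Ns \<subseteq> Lbul \<Longrightarrow>
       step (Pair C (apps (MAbs B) (N0 # Ns))) (Pair C (apps (mopen B N0) Ns))"
| R5: "step M M' \<Longrightarrow> M \<in> Lrb \<Longrightarrow> M' \<in> Lrb \<Longrightarrow> ctx_ok C \<Longrightarrow> set Ns \<subseteq> Lbul \<Longrightarrow>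
       step (Pair C (apps M Ns)) (Pair C (apps M' Ns))"

end

theory Submission
  imports Defs
begin

text \<open>Atoms are normal forms because every rule rewrites a pair.  Conversely, every pair
  in \<open>Lrb\<close> reduces: its body is a spine \<open>H N\<^sub>1 \<dots> N\<^sub>n\<close> whose head \<open>H\<close> is an atom
  (reduced by R1 or R3), an abstraction (reduced by R2 or R4), or again an element of
  \<open>Lrb\<close> that either reduces (then R5 applies) or is an atom.\<close>

fun lopen_at :: "nat \<Rightarrow> lam \<Rightarrow> lam \<Rightarrow> lam" where
  "lopen_at k u (LVar y) = LVar y"
| "lopen_at k u (LBVar n) = (if n = k then u else LBVar n)"
| "lopen_at k u (LApp s t) = LApp (lopen_at k u s) (lopen_at k u t)"
| "lopen_at k u (LAbs t) = LAbs (lopen_at (Suc k) u t)"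

lemma bul_lopen_at: "bul (lopen_at k u t) = mopen_at k (bul u) (bul t)"
  by (induction t arbitrary: k) auto

lemma lcn_mono: "lcn k t \<Longrightarrow> k \<le> j \<Longrightarrow> lcn j t"
  by (induction t arbitrary: k j) auto

lemma lcn_lopen_at: "lcn (Suc k) t \<Longrightarrow> lc u \<Longrightarrow> lcn k (lopen_at k u t)"
  by (induction t arbitrary: k) (auto simp: lc_def intro: lcn_mono)

lemma lcn_close_at: "lcn k t \<Longrightarrow> lcn (Suc k) (close_at k x t)"
  by (induction t arbitrary: k) auto

lemma lc_fill: "ctx_ok C \<Longrightarrow> lc M \<Longrightarrow> lc (fill C M)"
  by (induction C) (auto simp: lc_def intro: lcn_close_at)

lemma ctx_ok_ctx_comp: "ctx_ok C \<Longrightarrow> ctx_ok D \<Longrightarrow> ctx_ok (ctx_comp C D)"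
  by (induction C) auto

lemma apps_Cons: "apps M (N # Ns) = apps (MApp M N) Ns"
  by (simp add: apps_def)

lemma bul_in_Lbul: "lc M \<Longrightarrow> bul M \<in> Lbul"
  by (auto simp: Lbul_def)

lemma LbulE:
  assumes "M \<in> Lbul"
  obtains P where "lc P" "M = bul P"
  using assms by (auto simp: Lbul_def)

lemma MApp_in_Lbul:
  assumes "M \<in> Lbul" and "N \<in> Lbul"
  shows "MApp M N \<in> Lbul"
proof -
  obtain m n where "lc m" "M = bul m" "lc n" "N = bul n" using assms by (metis LbulE)
  then show ?thesis using bul_in_Lbul[of "LApp m n"] by (simp add: lc_def)
qed

lemma apps_in_Lbul: "M \<in> Lbul \<Longrightarrow> set Ns \<subseteq> Lbul \<Longrightarrow> apps M Ns \<in> Lbul"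
  by (induction Ns arbitrary: M) (auto simp: apps_def MApp_in_Lbul)

lemma mopen_in_Lbul:
  assumes "MAbs B \<in> Lbul" and "N \<in> Lbul"
  shows "mopen B N \<in> Lbul"
proof -
  obtain Q where "lc Q" "MAbs B = bul Q" using assms(1) by (rule LbulE)
  then obtain b where b: "lcn 1 b" "B = bul b" by (cases Q) (auto simp: lc_def)
  obtain n where n: "lc n" "N = bul n" using assms(2) by (rule LbulE)
  have "mopen B N = bul (lopen_at 0 n b)" by (simp add: mopen_def bul_lopen_at b n)
  moreover have "lc (lopen_at 0 n b)" using b n lcn_lopen_at by (auto simp: lc_def)
  ultimately show ?thesis by (simp add: bul_in_Lbul)
qed

lemma Atom_apps_reduces:
  assumes "lc P" "ctx_ok C" "set Ns \<subseteq> Lbul"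
  shows "\<exists>N\<in>Lrb. step (Pair C (apps (Atom P) Ns)) N"
proof (cases Ns)
  case Nil
  have "step (Pair C (Atom P)) (Atom (fill C P))" using assms by (intro R1)
  moreover have "Atom (fill C P) \<in> Lrb" using assms by (intro rb_atom lc_fill)
  ultimately show ?thesis using Nil by (auto simp: apps_def)
next
  case (Cons N0 Ns')
  let ?N = "Pair C (apps (Pair (CAppR P Hole) N0) Ns')"
  have "step (Pair C (apps (Atom P) (N0 # Ns'))) ?N" using assms Cons by (intro R3) auto
  moreover have "?N \<in> Lrb" using assms Cons by (intro rb_app rb_bul) auto
  ultimately show ?thesis using Cons by auto
qed

lemma MAbs_apps_reduces:
  assumes "MAbs B \<in> Lbul" "ctx_ok C" "set Ns \<subseteq> Lbul"
  shows "\<exists>N\<in>Lrb. step (Pair C (apps (MAbs B) Ns)) N"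
proof (cases Ns)
  case Nil
  have var: "Atom (LVar 0) \<in> Lbul" using bul_in_Lbul[of "LVar 0"] by (simp add: lc_def)
  let ?N = "Pair (ctx_comp C (CAbs 0 Hole)) (mopen B (Atom (LVar 0)))"
  have "step (Pair C (MAbs B)) ?N" using assms by (intro R2)
  moreover have "?N \<in> Lrb" using assms var by (intro rb_bul ctx_ok_ctx_comp mopen_in_Lbul) auto
  ultimately show ?thesis using Nil by (auto simp: apps_def)
next
  case (Cons N0 Ns')
  let ?N = "Pair C (apps (mopen B N0) Ns')"
  have "step (Pair C (apps (MAbs B) (N0 # Ns'))) ?N" using assms Cons by (intro R4) auto
  moreover have "?N \<in> Lrb" using assms Cons by (intro rb_bul apps_in_Lbul mopen_in_Lbul) auto
  ultimately show ?thesis using Cons by auto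
qed

lemma bul_apps_reduces:
  "lc P \<Longrightarrow> ctx_ok C \<Longrightarrow> set Ns \<subseteq> Lbul \<Longrightarrow> \<exists>N\<in>Lrb. step (Pair C (apps (bul P) Ns)) N"
proof (induction P arbitrary: Ns)
  case (LVar x)
  then show ?case using Atom_apps_reduces[of "LVar x"] by (simp add: lc_def)
next
  case (LBVar n)
  then show ?case by (simp add: lc_def)
next
  case (LApp s t)
  then have "lc s" "set (bul t # Ns) \<subseteq> Lbul" by (auto simp: lc_def intro: bul_in_Lbul)
  with LApp.IH(1)[of "bul t # Ns"] LApp.prems(2) show ?case by (simp add: apps_Cons)
next
  case (LAbs b)
  then show ?case using MAbs_apps_reduces bul_in_Lbul[of "LAbs b"] by simp
qed

lemma Lrb_progress: "M \<in> Lrb \<Longrightarrow> (\<exists>P. lc P \<and> M = Atom P) \<or> (\<exists>N\<in>Lrb. step M N)"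
proof (induction M rule: Lrb.induct)
  case (rb_atom M)
  then show ?case by auto
next
  case (rb_bul C M)
  then obtain P where "lc P" "M = bul P" by (auto elim: LbulE)
  then show ?case using bul_apps_reduces[of P C "[]"] rb_bul by (simp add: apps_def)
next
  case (rb_app C M Ns)
  from rb_app.IH show ?case
  proof
    assume "\<exists>P. lc P \<and> M = Atom P"
    then show ?thesis using Atom_apps_reduces rb_app.hyps by blast
  next
    assume "\<exists>N\<in>Lrb. step M N"
    then obtain N where "N \<in> Lrb" "step M N" by blast
    then show ?thesis using rb_app.hyps
      by (intro disjI2 bexI[of _ "Pair C (apps N Ns)"] R5 Lrb.rb_app) auto
  qed
qed

lemma Atom_no_step: "\<not> step (Atom P) N"
  by (auto elim: step.cases)

theorem proposition4:
  assumes "M \<in> Lrb"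
  shows "(\<not> (\<exists>N \<in> Lrb. step M N)) \<longleftrightarrow> (\<exists>P. lc P \<and> M = Atom P)"
  using Lrb_progress[OF assms] Atom_no_step by blast

end
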